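(* For $\mathbf z,\mathbf w\in\mathbb C^m\setminus\{0\}$: $$\mathbf Q_2^{(\hbar)}(\mathbf z,\mathbf w)=\tfrac12\Big(e^{(z_1\overline{w_1}+z_2\overline{w_2})/\hbar}+e^{-(z_1\overline{w_1}+z_2\overline{w_2})/\hbar}\Big),$$ $$\mathbf Q_4^{(\hbar)}(\mathbf z,\mathbf w)=\frac{1}{2\pi}\int_0^{2\pi}\exp\Big(\tfrac1\hbar\,\mathbf z\cdot \mathrm T(g(\psi))\mathbf w\Big)d\psi,$$ $$\mathbf Q_8^{(\hbar)}(\mathbf z,\mathbf w)=\int_{\theta=0}^{\pi/2}\int_{\alpha=0}^{2\pi}\int_{\gamma=0}^{2\pi}\exp\Big(\tfrac1\hbar\,\mathbf z\cdot \mathrm T(g(\theta,\alpha,\gamma))\mathbf w\Big)\,dm(\theta,\alpha,\gamma),$$ where $g(\psi)=e^{i\psi}\in S^1$, $g(\theta,\alpha,\gamma)=\begin{pmatrix}\cos\theta\, e^{i\alpha}&\sin\theta\, e^{i\gamma}\\ -\sin\theta\, e^{-i\gamma}&\cos\theta\, e^{-i\alpha}\end{pmatrix}\in\mathrm{SU}(2)$, and $dm(\theta,\alpha,\gamma)=\frac{1}{2\pi^2}\sin\theta\cos\theta\,d\theta\,d\alpha\,d\gamma$.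
   Context: For $\mathbf z,\mathbf w\in\mathbb C^k$ write $\mathbf z\cdot\mathbf w=\sum_{s=1}^k z_s\overline{w_s}$; $\hbar>0$. The kernels are $\mathbf Q_2^{(\hbar)}(\mathbf z,\mathbf w)=\sum_{k\ge0}\frac{(z_1\overline{w_1}+z_2\overline{w_2})^{2k}}{(2k)!\hbar^{2k}}$, $\mathbf Q_4^{(\hbar)}(\mathbf z,\mathbf w)=\sum_{k\ge0}\frac{(z_1\overline{w_1}+z_2\overline{w_2})^{k}(z_3\overline{w_3}+z_4\overline{w_4})^{k}}{(k!)^2\hbar^{2k}}$, $\mathbf Q_8^{(\hbar)}(\mathbf z,\mathbf w)=\sum_{k\ge0}\frac{\varrho(\mathbf z,\mathbf w)^k}{k!(k+1)!\hbar^{2k}}$, with $\varrho(\mathbf u,\mathbf v)=[u_1\overline{v_1}+u_2\overline{v_2}+u_3\overline{v_3}+u_4\overline{v_4}][u_5\overline{v_5}+u_6\overline{v_6}+u_7\overline{v_7}+u_8\overline{v_8}]+[u_7\overline{v_1}-u_8\overline{v_2}+u_5\overline{v_3}-u_6\overline{v_4}][u_2\overline{v_8}-u_3\overline{v_5}+u_4\overline{v_6}-u_1\overline{v_7}]$. Group actions: for $g=e^{i\theta}\in S^1$, $\mathrm T(g)=\mathrm{diag}(e^{-i\theta},e^{-i\theta},e^{i\theta},e^{i\theta})$ on $\mathbb C^4$; for $g\in\mathrm{SU}(2)$, $\mathrm T(g)=\mathbf L^\dagger\mathbf V(g)\mathbf L$ on $\mathbb C^8$, where $\mathbf V(g)$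 is the block-diagonal $8\times8$ matrix with four diagonal $2\times2$ blocks equal to $g$, and $\mathbf L$ is the $8\times 8$ real matrix whose rows are, in order, $e_1,e_7,e_3,e_5,-e_4,e_6,-e_2,e_8$ ($e_j$ the standard basis row vectors). *)

theory Defs
  imports "HOL-Analysis.Analysis"
begin

text \<open>Vectors in C^m are represented as functions nat => complex, using the
  components with indices 1..m; square matrices as nat => nat => complex
  with indices 1..m.\<close>

definition cdot :: "nat \<Rightarrow> (nat \<Rightarrow> complex) \<Rightarrow> (nat \<Rightarrow> complex) \<Rightarrow> complex" where
  "cdot m z w = (\<Sum>s=1..m. z s * cnj (w s))"

definition nonzero_vec :: "nat \<Rightarrow> (nat \<Rightarrow> complex) \<Rightarrow> bool" where
  "nonzero_vec m z \<longleftrightarrow> (\<exists>s\<in>{1..m}. z s \<noteq> 0)"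

definition mat_vec :: "nat \<Rightarrow> (nat \<Rightarrow> nat \<Rightarrow> complex) \<Rightarrow> (nat \<Rightarrow> complex) \<Rightarrow> (nat \<Rightarrow> complex)" where
  "mat_vec m A w = (\<lambda>i. \<Sum>j=1..m. A i j * w j)"

definition mat_mul :: "nat \<Rightarrow> (nat \<Rightarrow> nat \<Rightarrow> complex) \<Rightarrow> (nat \<Rightarrow> nat \<Rightarrow> complex) \<Rightarrow> (nat \<Rightarrow> nat \<Rightarrow> complex)" where
  "mat_mul m A B = (\<lambda>i j. \<Sum>k=1..m. A i k * B k j)"

definition mat_adj :: "(nat \<Rightarrow> nat \<Rightarrow> complex) \<Rightarrow> (nat \<Rightarrow> nat \<Rightarrow> complex)" where
  "mat_adj A = (\<lambda>i j. cnj (A j i))"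

definition Q2 :: "real \<Rightarrow> (nat \<Rightarrow> complex) \<Rightarrow> (nat \<Rightarrow> complex) \<Rightarrow> complex" where
  "Q2 h z w = (\<Sum>k. (z 1 * cnj (w 1) + z 2 * cnj (w 2)) ^ (2*k)
                      / (of_nat (fact (2*k)) * of_real h ^ (2*k)))"

definition Q4 :: "real \<Rightarrow> (nat \<Rightarrow> complex) \<Rightarrow> (nat \<Rightarrow> complex) \<Rightarrow> complex" where
  "Q4 h z w = (\<Sum>k. (z 1 * cnj (w 1) + z 2 * cnj (w 2)) ^ k * (z 3 * cnj (w 3) + z 4 * cnj (w 4)) ^ k
                      / ((of_nat (fact k))\<^sup>2 * of_real h ^ (2*k)))"

definition rho :: "(nat \<Rightarrow> complex) \<Rightarrow> (nat \<Rightarrow> complex) \<Rightarrow> complex" where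
  "rho u v =
     (u 1 * cnj (v 1) + u 2 * cnj (v 2) + u 3 * cnj (v 3) + u 4 * cnj (v 4))
   * (u 5 * cnj (v 5) + u 6 * cnj (v 6) + u 7 * cnj (v 7) + u 8 * cnj (v 8))
   + (u 7 * cnj (v 1) - u 8 * cnj (v 2) + u 5 * cnj (v 3) - u 6 * cnj (v 4))
   * (u 2 * cnj (v 8) - u 3 * cnj (v 5) + u 4 * cnj (v 6) - u 1 * cnj (v 7))"

definition Q8 :: "real \<Rightarrow> (nat \<Rightarrow> complex) \<Rightarrow> (nat \<Rightarrow> complex) \<Rightarrow> complex" where
  "Q8 h z w = (\<Sum>k. rho z w ^ k / (of_nat (fact k * fact (k+1)) * of_real h ^ (2*k)))"

definition T4 :: "complex \<Rightarrow> (nat \<Rightarrow> nat \<Rightarrow> complex)" where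
  "T4 g = (\<lambda>i j. if i = j then (if i \<le> 2 then inverse g else g) else 0)"

text \<open>The SU(2) action on C^8: T(g) = L^dagger V(g) L.  g is a 2x2 matrix with
  indices 1,2.  The rows of L are e1, e7, e3, e5, -e4, e6, -e2, e8.\<close>

definition L8 :: "nat \<Rightarrow> nat \<Rightarrow> complex" where
  "L8 i j = (if i \<in> {1..8} \<and> j = [1,7,3,5,4,6,2,8::nat] ! (i-1)
             then [1,1,1,1,-1,1,-1,1::complex] ! (i-1) else 0)"

definition V8 :: "(nat \<Rightarrow> nat \<Rightarrow> complex) \<Rightarrow> nat \<Rightarrow> nat \<Rightarrow> complex" where
  "V8 g i j = (if i \<in> {1..8} \<and> j \<in> {1..8} \<and> (i+1) div 2 = (j+1) div 2
               then g (if odd i then 1 else 2) (if odd j then 1 else 2) else 0)"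

definition T8 :: "(nat \<Rightarrow> nat \<Rightarrow> complex) \<Rightarrow> nat \<Rightarrow> nat \<Rightarrow> complex" where
  "T8 g = mat_mul 8 (mat_adj L8) (mat_mul 8 (V8 g) L8)"

definition gSU2 :: "real \<Rightarrow> real \<Rightarrow> real \<Rightarrow> nat \<Rightarrow> nat \<Rightarrow> complex" where
  "gSU2 \<theta> \<alpha> \<gamma> = (\<lambda>i j.
     if i = 1 \<and> j = 1 then of_real (cos \<theta>) * cis \<alpha>
     else if i = 1 \<and> j = 2 then of_real (sin \<theta>) * cis \<gamma>
     else if i = 2 \<and> j = 1 then - of_real (sin \<theta>) * cis (- \<gamma>)
     else if i = 2 \<and> j = 2 then of_real (cos \<theta>) * cis (- \<alpha>)
     else 0)"

end

theory Submission
  imports Defs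
begin

text \<open>
  \<open>Q\<^sub>2\<close> is the even part of the exponential series, a hyperbolic cosine. For the other two
  kernels write the exponent in coordinates: on \<open>S\<^sup>1\<close> it is \<open>x e^(-i\<psi>) + y e^(i\<psi>)\<close>, and on
  \<open>SU(2)\<close> it is \<open>cos \<theta> (a e^(-i\<alpha>) + d e^(i\<alpha>)) + sin \<theta> (b e^(-i\<gamma>) + e e^(i\<gamma>))\<close>,
  where \<open>ad + be = \<rho>/\<hbar>\<^sup>2\<close> is a determinant. Averaging \<open>exp (x e^(-it) + y e^(it))\<close> over the
  circle keeps only the balanced terms of the exponential series and yields \<open>\<Sum> (xy)^k / (k!)^2\<close>.
  On \<open>SU(2)\<close> this leaves a \<open>\<theta>\<close>-integral of the product of two such series, in \<open>cos\<^sup>2\<theta> ad\<close>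
  and \<open>sin\<^sup>2\<theta> be\<close>; the beta integral
  \<open>\<integral>\<^sub>0\<^sup>\<pi>\<^sup>/\<^sup>2 cos^(2p+1) \<theta> sin^(2q+1) \<theta> d\<theta> = p! q! / (2 (p+q+1)!)\<close>
  collapses their Cauchy product into \<open>\<Sum> (ad + be)^k / (k! (k+1)!)\<close>.
\<close>

lemma sums_integral_M_test:
  fixes f :: "nat \<Rightarrow> real \<Rightarrow> 'a::banach"
  assumes cont: "\<And>n. continuous_on {a..b} (f n)"
    and bound: "\<And>n t. t \<in> {a..b} \<Longrightarrow> norm (f n t) \<le> M n" and "summable M"
  shows "(\<lambda>n. integral {a..b} (f n)) sums integral {a..b} (\<lambda>t. \<Sum>n. f n t)"
proof -
  have U: "uniform_limit {a..b} (\<lambda>N t. \<Sum>n<N. f n t) (\<lambda>t. \<Sum>n. f n t) sequentially"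
    using bound \<open>summable M\<close> by (rule Weierstrass_m_test)
  have "\<And>N. continuous_on {a..b} (\<lambda>t. \<Sum>n<N. f n t)"
    using cont by (intro continuous_intros)
  then obtain I J where I: "\<And>N. ((\<lambda>t. \<Sum>n<N. f n t) has_integral I N) {a..b}"
    and J: "((\<lambda>t. \<Sum>n. f n t) has_integral J) {a..b}" and lim: "I \<longlonglongrightarrow> J"
    using uniform_limit_integral[OF U] by auto
  have "I = (\<lambda>N. \<Sum>n<N. integral {a..b} (f n))"
  proof
    fix N
    have "I N = integral {a..b} (\<lambda>t. \<Sum>n<N. f n t)"
      using I by (metis integral_unique)
    also have "\<dots> = (\<Sum>n<N. integral {a..b} (f n))"
      by (rule integral_sum) (auto intro: integrable_continuous_interval cont)
    finally show "I N = (\<Sum>n<N. integral {a..b} (f n))" .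
  qed
  then show ?thesis
    using lim integral_unique[OF J] by (simp add: sums_def)
qed

lemma sums_even_terms_iff:
  assumes "\<And>n. odd n \<Longrightarrow> F n = 0"
  shows "(\<lambda>k. F (2*k)) sums c \<longleftrightarrow> F sums c"
proof (rule sums_mono_reindex)
  show "strict_mono (\<lambda>k::nat. 2*k)"
    by (auto simp: strict_mono_def)
  show "F n = 0" if "n \<notin> range (\<lambda>k::nat. 2*k)" for n
    using that assms by (metis evenE rangeI)
qed

lemma exp_sums_divide_fact: "(\<lambda>n. u ^ n / fact n) sums exp (u :: complex)"
  using exp_converges[of u] by (simp add: scaleR_conv_of_real divide_inverse mult.commute)

lemma integral_complex_of_real_continuous:
  fixes f :: "real \<Rightarrow> real"
  assumes "continuous_on {a..b} f"
  shows "integral {a..b} (\<lambda>x. complex_of_real (f x)) = of_real (integral {a..b} f)"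
  using has_integral_of_real[OF integrable_integral[OF integrable_continuous_interval[OF assms]]]
  by (rule integral_unique)

lemma integral_cis_int_multiple:
  fixes k :: int
  shows "integral {0..2*pi} (\<lambda>t. cis (of_int k * t)) = (if k = 0 then of_real (2 * pi) else 0)"
proof (cases "k = 0")
  case True
  then show ?thesis by (simp add: scaleR_conv_of_real)
next
  case False
  have "((\<lambda>t. cis (of_int k * t)) has_integral
          cis (of_int k * (2*pi)) / (\<i> * of_int k) - cis (of_int k * 0) / (\<i> * of_int k)) {0..2*pi}"
  proof (rule fundamental_theorem_of_calculus)
    fix x :: real
    show "((\<lambda>t. cis (of_int k * t) / (\<i> * of_int k)) has_vector_derivative cis (of_int k * x))
           (at x within {0..2*pi})"
      unfolding has_vector_derivative_def using False
      by (auto intro!: derivative_eq_intros simp: field_simps scaleR_conv_of_real)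
  qed simp
  moreover have "cis (of_int k * (2*pi)) = 1"
    by (metis cis_multiple_2pi Ints_of_int mult.commute)
  ultimately show ?thesis
    using False by (simp add: integral_unique)
qed

lemma integral_circle_binomial_power:
  fixes x y :: complex
  shows "integral {0..2*pi} (\<lambda>t. (x * cis (-t) + y * cis t) ^ n)
     = (if even n then of_real (2*pi) * of_nat (n choose (n div 2)) * (x*y) ^ (n div 2) else 0)"
proof -
  define c where "c k = of_nat (n choose k) * x ^ k * y ^ (n - k)" for k
  have expand: "(x * cis (-t) + y * cis t) ^ n = (\<Sum>k\<le>n. c k * cis (of_int (int n - 2 * int k) * t))"
    for t
  proof -
    have "cis (-t) ^ k * cis t ^ (n - k) = cis (of_int (int n - 2 * int k) * t)" if "k \<le> n" for k
    proof -
      have "cis (-t) ^ k * cis t ^ (n - k) = cis (real k * (-t) + real (n - k) * t)"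
        by (simp only: Complex.DeMoivre cis_mult)
      also have "real k * (-t) + real (n - k) * t = of_int (int n - 2 * int k) * t"
        using that by (simp add: of_nat_diff algebra_simps)
      finally show ?thesis .
    qed
    then show ?thesis
      unfolding binomial_ring c_def by (intro sum.cong) (auto simp: power_mult_distrib mult_ac)
  qed
  have "integral {0..2*pi} (\<lambda>t. (x * cis (-t) + y * cis t) ^ n)
      = (\<Sum>k\<le>n. integral {0..2*pi} (\<lambda>t. c k * cis (of_int (int n - 2 * int k) * t)))"
    unfolding expand
    by (rule integral_sum) (auto intro!: integrable_continuous_interval continuous_intros)
  also have "\<dots> = (\<Sum>k\<le>n. c k * integral {0..2*pi} (\<lambda>t. cis (of_int (int n - 2 * int k) * t)))"
    by simp
  also have "\<dots> = (\<Sum>k\<le>n. if k = n div 2 then (if even n then of_real (2*pi) * c k else 0) else 0)"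
  proof (intro sum.cong refl)
    fix k assume "k \<in> {..n}"
    then have "(int n - 2 * int k = 0) = (even n \<and> k = n div 2)"
      by presburger
    then show "c k * integral {0..2*pi} (\<lambda>t. cis (of_int (int n - 2 * int k) * t))
        = (if k = n div 2 then (if even n then of_real (2*pi) * c k else 0) else 0)"
      unfolding integral_cis_int_multiple by auto
  qed
  also have "\<dots> = (if even n then of_real (2*pi) * c (n div 2) else 0)"
    by simp
  also have "\<dots> = (if even n then of_real (2*pi) * of_nat (n choose (n div 2)) * (x*y) ^ (n div 2) else 0)"
    by (auto simp: c_def power_mult_distrib mult_ac elim!: evenE)
  finally show ?thesis .
qed

text \<open>The series of \<open>I\<^sub>0(2\<surd>u)\<close>, \<open>I\<^sub>0\<close> the modified Bessel function of order zero.\<close>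

definition bessel_series :: "complex \<Rightarrow> complex" where
  "bessel_series u = (\<Sum>k. u ^ k / (fact k)\<^sup>2)"

lemma summable_norm_bessel_series: "summable (\<lambda>k. norm (u ^ k / (fact k)\<^sup>2 :: complex))"
proof (rule summable_comparison_test)
  show "summable (\<lambda>k. inverse (fact k) * norm u ^ k)"
    by (rule summable_exp)
  show "\<exists>N. \<forall>k\<ge>N. norm (norm (u ^ k / (fact k)\<^sup>2)) \<le> inverse (fact k) * norm u ^ k"
  proof (intro exI allI impI)
    fix k :: nat
    have "norm (norm (u ^ k / (fact k)\<^sup>2)) = norm u ^ k / (fact k)\<^sup>2"
      by (simp add: norm_divide norm_power)
    also have "\<dots> \<le> norm u ^ k / fact k"
      by (intro divide_left_mono) (simp_all add: power2_eq_square mult_le_cancel_left1)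
    finally show "norm (norm (u ^ k / (fact k)\<^sup>2)) \<le> inverse (fact k) * norm u ^ k"
      by (simp add: divide_inverse mult.commute)
  qed
qed

lemma bessel_series_sums: "(\<lambda>k. u ^ k / (fact k)\<^sup>2) sums bessel_series u"
  unfolding bessel_series_def
  by (rule summable_sums[OF summable_norm_cancel[OF summable_norm_bessel_series]])

lemma norm_bessel_term_scaled_le:
  assumes "\<bar>s\<bar> \<le> 1"
  shows "norm ((of_real s * u) ^ k / (fact k)\<^sup>2) \<le> norm (u ^ k / (fact k)\<^sup>2 :: complex)"
proof -
  have "\<bar>s\<bar> ^ k * norm u ^ k \<le> 1 * norm u ^ k"
    using assms by (intro mult_right_mono power_le_one) auto
  then show ?thesis
    by (simp add: norm_divide norm_mult norm_power power_mult_distrib divide_right_mono)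
qed

lemma integral_exp_circle:
  fixes x y :: complex
  shows "integral {0..2*pi} (\<lambda>t. exp (x * cis (-t) + y * cis t)) = of_real (2*pi) * bessel_series (x*y)"
proof -
  define f where "f n t = (x * cis (-t) + y * cis t) ^ n / fact n" for n t
  have termwise: "(\<lambda>n. integral {0..2*pi} (f n)) sums integral {0..2*pi} (\<lambda>t. \<Sum>n. f n t)"
  proof (rule sums_integral_M_test)
    show "summable (\<lambda>n. inverse (fact n) * (norm x + norm y) ^ n)"
      by (rule summable_exp)
    fix n t
    have "norm (x * cis (-t) + y * cis t) \<le> norm x + norm y"
      by (rule order_trans[OF norm_triangle_ineq]) (simp add: norm_mult)
    then have "norm (x * cis (-t) + y * cis t) ^ n \<le> (norm x + norm y) ^ n"
      by (rule power_mono) simp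
    then show "norm (f n t) \<le> inverse (fact n) * (norm x + norm y) ^ n"
      unfolding f_def norm_divide norm_power norm_fact
      by (simp add: divide_inverse mult.commute mult_left_mono)
  qed (auto simp: f_def intro!: continuous_intros)
  have exp_series: "(\<lambda>t. \<Sum>n. f n t) = (\<lambda>t. exp (x * cis (-t) + y * cis t))"
    unfolding f_def using exp_sums_divide_fact sums_unique by metis
  have integral_f: "integral {0..2*pi} (f n)
      = (if even n then of_real (2*pi) * of_nat (n choose (n div 2)) * (x*y) ^ (n div 2) else 0) / fact n"
    for n
    unfolding f_def by (simp only: integral_divide integral_circle_binomial_power)
  have integral_f_even: "integral {0..2*pi} (f (2*k)) = of_real (2*pi) * ((x*y) ^ k / (fact k)\<^sup>2)" for k
  proof -
    have "fact k * fact k * ((2*k) choose k) = (fact (2*k) :: nat)"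
      using binomial_fact_lemma[of k "2*k"] by (simp add: mult_2)
    then have "(fact k)\<^sup>2 * (of_nat ((2*k) choose k) :: complex) = fact (2*k)"
      by (metis (mono_tags) of_nat_fact of_nat_mult power2_eq_square)
    then show ?thesis
      unfolding integral_f by (simp add: field_simps)
  qed
  have "(\<lambda>k. integral {0..2*pi} (f (2*k))) sums integral {0..2*pi} (\<lambda>t. exp (x * cis (-t) + y * cis t))"
    using sums_even_terms_iff[of "\<lambda>n. integral {0..2*pi} (f n)"] termwise
    unfolding exp_series by (simp add: integral_f)
  then have "(\<lambda>k. of_real (2*pi) * ((x*y) ^ k / (fact k)\<^sup>2))
      sums integral {0..2*pi} (\<lambda>t. exp (x * cis (-t) + y * cis t))"
    unfolding integral_f_even .
  then show ?thesis
    using sums_mult[OF bessel_series_sums, of "of_real (2*pi)" "x*y"] sums_unique2 by blast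
qed

lemma integral_exp_torus:
  fixes a b d e :: complex
  shows "integral {0..2*pi} (\<lambda>\<alpha>. integral {0..2*pi} (\<lambda>\<gamma>.
      exp (of_real c * (a * cis (-\<alpha>) + d * cis \<alpha>) + of_real s * (b * cis (-\<gamma>) + e * cis \<gamma>))))
    = of_real (2*pi) * bessel_series (of_real (c\<^sup>2) * (a*d))
      * (of_real (2*pi) * bessel_series (of_real (s\<^sup>2) * (b*e)))"
proof -
  have "integral {0..2*pi} (\<lambda>\<gamma>. exp (of_real s * (b * cis (-\<gamma>) + e * cis \<gamma>)))
      = of_real (2*pi) * bessel_series (of_real (s\<^sup>2) * (b*e))"
    using integral_exp_circle[of "of_real s * b" "of_real s * e"]
    by (simp add: algebra_simps power2_eq_square)
  moreover have "integral {0..2*pi} (\<lambda>\<alpha>. exp (of_real c * (a * cis (-\<alpha>) + d * cis \<alpha>)))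
      = of_real (2*pi) * bessel_series (of_real (c\<^sup>2) * (a*d))"
    using integral_exp_circle[of "of_real c * a" "of_real c * d"]
    by (simp add: algebra_simps power2_eq_square)
  ultimately show ?thesis
    by (simp add: exp_add)
qed

definition cos_sin_moment :: "nat \<Rightarrow> nat \<Rightarrow> real" where
  "cos_sin_moment m n = integral {0..pi/2} (\<lambda>\<theta>. cos \<theta> ^ m * sin \<theta> ^ n)"

lemma has_real_derivative_cos_power:
  "((\<lambda>\<theta>. cos \<theta> ^ Suc m) has_real_derivative (real (Suc m) * cos x ^ m * (- sin x))) (at x within S)"
  by (rule DERIV_cong[OF DERIV_power[OF has_field_derivative_at_within[OF DERIV_cos]]]) simp

lemma has_real_derivative_sin_power:
  "((\<lambda>\<theta>. sin \<theta> ^ Suc m) has_real_derivative (real (Suc m) * sin x ^ m * cos x)) (at x within S)"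
  by (rule DERIV_cong[OF DERIV_power[OF has_field_derivative_at_within[OF DERIV_sin]]]) simp

lemma cos_sin_moment_sin1: "cos_sin_moment m 1 = 1 / (real m + 1)"
proof -
  have "((\<lambda>\<theta>. cos \<theta> ^ m * sin \<theta>) has_integral
      (- (cos (pi/2) ^ Suc m) / real (Suc m)) - (- (cos 0 ^ Suc m) / real (Suc m))) {0..pi/2}"
  proof (rule fundamental_theorem_of_calculus)
    fix x :: real
    have "((\<lambda>\<theta>. - (cos \<theta> ^ Suc m) / real (Suc m)) has_real_derivative
        - (real (Suc m) * cos x ^ m * (- sin x)) / real (Suc m)) (at x within {0..pi/2})"
      by (intro DERIV_cdivide DERIV_minus has_real_derivative_cos_power)
    then show "((\<lambda>\<theta>. - (cos \<theta> ^ Suc m) / real (Suc m)) has_vector_derivative cos x ^ m * sin x)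
        (at x within {0..pi/2})"
      by (simp del: of_nat_Suc flip: has_real_derivative_iff_has_vector_derivative)
  qed simp
  then show ?thesis
    by (simp add: cos_sin_moment_def integral_unique)
qed

lemma cos_sin_moment_split:
  "cos_sin_moment m n = cos_sin_moment (Suc (Suc m)) n + cos_sin_moment m (Suc (Suc n))"
proof -
  have "cos \<theta> ^ m * sin \<theta> ^ n = cos \<theta> ^ Suc (Suc m) * sin \<theta> ^ n + cos \<theta> ^ m * sin \<theta> ^ Suc (Suc n)"
    for \<theta> :: real
  proof -
    have "cos \<theta> ^ m * sin \<theta> ^ n = cos \<theta> ^ m * sin \<theta> ^ n * ((cos \<theta>)\<^sup>2 + (sin \<theta>)\<^sup>2)"
      by simp
    also have "\<dots> = cos \<theta> ^ Suc (Suc m) * sin \<theta> ^ n + cos \<theta> ^ m * sin \<theta> ^ Suc (Suc n)"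
      by (simp only: power_Suc power2_eq_square) algebra
    finally show ?thesis .
  qed
  then show ?thesis
    unfolding cos_sin_moment_def
    by (simp only:) (rule integral_add; intro integrable_continuous_interval continuous_intros)
qed

lemma cos_sin_moment_parts:
  "real (Suc n) * cos_sin_moment (Suc (Suc m)) n = real (Suc m) * cos_sin_moment m (Suc (Suc n))"
proof -
  define D where "D x = real (Suc n) * (cos x ^ Suc (Suc m) * sin x ^ n)
    - real (Suc m) * (cos x ^ m * sin x ^ Suc (Suc n))" for x
  have "(D has_integral cos (pi/2) ^ Suc m * sin (pi/2) ^ Suc n - cos 0 ^ Suc m * sin 0 ^ Suc n) {0..pi/2}"
  proof (rule fundamental_theorem_of_calculus)
    fix x :: real
    have "((\<lambda>\<theta>. cos \<theta> ^ Suc m * sin \<theta> ^ Suc n) has_real_derivative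
        real (Suc m) * cos x ^ m * (- sin x) * sin x ^ Suc n + real (Suc n) * sin x ^ n * cos x * cos x ^ Suc m)
        (at x within {0..pi/2})"
      by (rule DERIV_mult[OF has_real_derivative_cos_power has_real_derivative_sin_power])
    moreover have "real (Suc m) * cos x ^ m * (- sin x) * sin x ^ Suc n + real (Suc n) * sin x ^ n * cos x * cos x ^ Suc m
        = D x"
      by (simp add: D_def algebra_simps)
    ultimately show "((\<lambda>\<theta>. cos \<theta> ^ Suc m * sin \<theta> ^ Suc n) has_vector_derivative D x) (at x within {0..pi/2})"
      by (simp flip: has_real_derivative_iff_has_vector_derivative)
  qed simp
  then have "integral {0..pi/2} D = 0"
    by (simp add: integral_unique)
  moreover have "integral {0..pi/2} D = real (Suc n) * cos_sin_moment (Suc (Suc m)) n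
      - real (Suc m) * cos_sin_moment m (Suc (Suc n))"
    unfolding D_def cos_sin_moment_def
    by (subst integral_diff) (auto intro!: integrable_continuous_interval continuous_intros)
  ultimately show ?thesis
    by simp
qed

lemma cos_sin_moment_odd:
  "cos_sin_moment (2*p + 1) (2*q + 1) = fact p * fact q / (2 * fact (p + q + 1))"
proof (induction q)
  case 0
  have "cos_sin_moment (2*p + 1) (2*0 + 1) = 1 / (2 * (real p + 1))"
    using cos_sin_moment_sin1[of "2*p + 1"] by simp
  moreover have "(2 * fact (p + 0 + 1) :: real) = fact p * (2 * (real p + 1))"
    by (simp add: algebra_simps)
  ultimately show ?case
    by simp
next
  case (Suc q)
  have Suc2: "Suc (Suc (2*k + 1)) = 2 * Suc k + 1" for k
    by simp
  have "cos_sin_moment (2*p + 1) (2*q + 1)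
      = cos_sin_moment (2 * Suc p + 1) (2*q + 1) + cos_sin_moment (2*p + 1) (2 * Suc q + 1)"
    using cos_sin_moment_split[of "2*p + 1" "2*q + 1"] by (simp only: Suc2)
  moreover have "(real q + 1) * cos_sin_moment (2 * Suc p + 1) (2*q + 1)
      = (real p + 1) * cos_sin_moment (2*p + 1) (2 * Suc q + 1)"
    using cos_sin_moment_parts[of "2*q + 1" "2*p + 1"] by (simp add: Suc2 algebra_simps)
  ultimately have "cos_sin_moment (2*p + 1) (2 * Suc q + 1) * (real p + real q + 2)
      = (real q + 1) * cos_sin_moment (2*p + 1) (2*q + 1)"
    by (simp add: algebra_simps)
  then have "cos_sin_moment (2*p + 1) (2 * Suc q + 1)
      = (real q + 1) * cos_sin_moment (2*p + 1) (2*q + 1) / (real p + real q + 2)"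
    by (simp add: field_simps)
  also have "\<dots> = fact p * fact (Suc q) / (2 * fact (p + Suc q + 1))"
    unfolding Suc.IH by (simp add: field_simps)
  finally show ?case .
qed

lemma integral_bessel_product_summand:
  fixes u v :: complex
  assumes "p \<le> k"
  shows "integral {0..pi/2} (\<lambda>\<theta>. u ^ p * v ^ (k - p) / ((fact p)\<^sup>2 * (fact (k - p))\<^sup>2)
           * of_real (2 * (cos \<theta> ^ (2*p + 1) * sin \<theta> ^ (2*(k - p) + 1))))
       = of_nat (k choose p) * u ^ p * v ^ (k - p) / (fact k * fact (k + 1))"
proof -
  have "integral {0..pi/2} (\<lambda>\<theta>. complex_of_real (2 * (cos \<theta> ^ (2*p + 1) * sin \<theta> ^ (2*(k - p) + 1))))
      = of_real (2 * cos_sin_moment (2*p + 1) (2*(k - p) + 1))"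
    unfolding cos_sin_moment_def
    by (subst integral_complex_of_real_continuous) (auto intro!: continuous_intros)
  also have "\<dots> = fact p * fact (k - p) / fact (k + 1)"
    unfolding cos_sin_moment_odd using assms by simp
  finally have moment: "integral {0..pi/2}
      (\<lambda>\<theta>. complex_of_real (2 * (cos \<theta> ^ (2*p + 1) * sin \<theta> ^ (2*(k - p) + 1))))
      = fact p * fact (k - p) / fact (k + 1)" .
  have "(of_nat (k choose p) :: complex) = fact k / (fact p * fact (k - p))"
    using assms by (rule binomial_fact)
  then show ?thesis
    unfolding Henstock_Kurzweil_Integration.integral_mult_right moment
    by (simp add: power2_eq_square field_simps del: fact_Suc)
qed

definition bessel_product_term :: "complex \<Rightarrow> complex \<Rightarrow> nat \<Rightarrow> real \<Rightarrow> complex" where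
  "bessel_product_term u v k \<theta> = of_real (2 * sin \<theta> * cos \<theta>) *
     (\<Sum>p\<le>k. (of_real ((cos \<theta>)\<^sup>2) * u) ^ p / (fact p)\<^sup>2
       * ((of_real ((sin \<theta>)\<^sup>2) * v) ^ (k - p) / (fact (k - p))\<^sup>2))"

lemma bessel_product_term_sums:
  "(\<lambda>k. bessel_product_term u v k \<theta>) sums (of_real (2 * sin \<theta> * cos \<theta>)
     * bessel_series (of_real ((cos \<theta>)\<^sup>2) * u) * bessel_series (of_real ((sin \<theta>)\<^sup>2) * v))"
  unfolding bessel_product_term_def mult.assoc bessel_series_def
  by (intro sums_mult Cauchy_product_sums summable_norm_bessel_series)

lemma norm_bessel_product_term_le:
  "norm (bessel_product_term u v k \<theta>)
     \<le> 2 * (\<Sum>p\<le>k. norm (u ^ p / (fact p)\<^sup>2) * norm (v ^ (k - p) / (fact (k - p))\<^sup>2))"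
proof -
  define a where "a p = (of_real ((cos \<theta>)\<^sup>2) * u) ^ p / (fact p)\<^sup>2" for p
  define b where "b q = (of_real ((sin \<theta>)\<^sup>2) * v) ^ q / (fact q)\<^sup>2" for q
  have "\<bar>2 * sin \<theta> * cos \<theta>\<bar> \<le> 2"
    using abs_sin_le_one[of \<theta>] abs_cos_le_one[of \<theta>] by (simp add: abs_mult mult_le_one)
  moreover have "norm (\<Sum>p\<le>k. a p * b (k - p)) \<le> (\<Sum>p\<le>k. norm (a p) * norm (b (k - p)))"
    by (rule order_trans[OF norm_sum]) (simp add: norm_mult)
  ultimately have "norm (bessel_product_term u v k \<theta>) \<le> 2 * (\<Sum>p\<le>k. norm (a p) * norm (b (k - p)))"
    unfolding bessel_product_term_def a_def[symmetric] b_def[symmetric] norm_mult norm_of_real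
    by (intro mult_mono) (auto intro: sum_nonneg)
  also have "\<dots> \<le> 2 * (\<Sum>p\<le>k. norm (u ^ p / (fact p)\<^sup>2) * norm (v ^ (k - p) / (fact (k - p))\<^sup>2))"
    unfolding a_def b_def
    by (intro mult_left_mono sum_mono mult_mono norm_bessel_term_scaled_le)
      (simp_all add: abs_square_le_1 abs_sin_le_one abs_cos_le_one)
  finally show ?thesis .
qed

lemma integral_bessel_product_term:
  "integral {0..pi/2} (bessel_product_term u v k) = (u + v) ^ k / (fact k * fact (k + 1))"
proof -
  have odd_power: "x ^ (2*p + 1) = x * (x\<^sup>2) ^ p" for x :: real and p
    by (simp add: power_mult)
  have expand: "bessel_product_term u v k \<theta> = (\<Sum>p\<le>k. u ^ p * v ^ (k - p) / ((fact p)\<^sup>2 * (fact (k - p))\<^sup>2)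
      * of_real (2 * (cos \<theta> ^ (2*p + 1) * sin \<theta> ^ (2*(k - p) + 1))))" for \<theta>
    unfolding bessel_product_term_def sum_distrib_left odd_power
    by (intro sum.cong) (simp_all add: power_mult_distrib mult_ac)
  have "integral {0..pi/2} (bessel_product_term u v k) = (\<Sum>p\<le>k. integral {0..pi/2} (\<lambda>\<theta>.
      u ^ p * v ^ (k - p) / ((fact p)\<^sup>2 * (fact (k - p))\<^sup>2)
      * of_real (2 * (cos \<theta> ^ (2*p + 1) * sin \<theta> ^ (2*(k - p) + 1)))))"
    unfolding expand[abs_def]
    by (rule integral_sum) (auto intro!: integrable_continuous_interval continuous_intros)
  also have "\<dots> = (\<Sum>p\<le>k. of_nat (k choose p) * u ^ p * v ^ (k - p) / (fact k * fact (k + 1)))"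
    by (intro sum.cong refl integral_bessel_product_summand) simp
  also have "\<dots> = (u + v) ^ k / (fact k * fact (k + 1))"
    by (simp add: binomial_ring sum_divide_distrib)
  finally show ?thesis .
qed

lemma integral_bessel_product_sums:
  "(\<lambda>k. (u + v) ^ k / (fact k * fact (k + 1))) sums
    integral {0..pi/2} (\<lambda>\<theta>. of_real (2 * sin \<theta> * cos \<theta>)
      * bessel_series (of_real ((cos \<theta>)\<^sup>2) * u) * bessel_series (of_real ((sin \<theta>)\<^sup>2) * v))"
proof -
  have "(\<lambda>k. integral {0..pi/2} (bessel_product_term u v k))
      sums integral {0..pi/2} (\<lambda>\<theta>. \<Sum>k. bessel_product_term u v k \<theta>)"
  proof (rule sums_integral_M_test)
    show "continuous_on {0..pi/2} (bessel_product_term u v k)" for k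
      unfolding bessel_product_term_def by (intro continuous_intros) auto
    show "summable (\<lambda>k. 2 * (\<Sum>p\<le>k. norm (u ^ p / (fact p)\<^sup>2) * norm (v ^ (k - p) / (fact (k - p))\<^sup>2)))"
      using summable_Cauchy_product[of "\<lambda>p. norm (u ^ p / (fact p)\<^sup>2)" "\<lambda>q. norm (v ^ q / (fact q)\<^sup>2)"]
      by (intro summable_mult) (simp add: summable_norm_bessel_series)
  qed (rule norm_bessel_product_term_le)
  moreover have "(\<lambda>\<theta>. \<Sum>k. bessel_product_term u v k \<theta>) = (\<lambda>\<theta>. of_real (2 * sin \<theta> * cos \<theta>)
      * bessel_series (of_real ((cos \<theta>)\<^sup>2) * u) * bessel_series (of_real ((sin \<theta>)\<^sup>2) * v))"
    by (rule ext, rule sums_unique[symmetric], rule bessel_product_term_sums)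
  ultimately show ?thesis
    by (simp add: integral_bessel_product_term)
qed

lemma atLeastAtMost_1_2: "{1..2::nat} = {1, 2}"
  by auto

lemma atLeastAtMost_1_4: "{1..4::nat} = {1, 2, 3, 4}"
  by auto

lemma atLeastAtMost_1_8: "{1..8::nat} = {1, 2, 3, 4, 5, 6, 7, 8}"
  by auto

lemma mat_vec_mat_mul: "mat_vec m (mat_mul m A B) w = mat_vec m A (mat_vec m B w)"
  unfolding mat_vec_def mat_mul_def
  by (rule ext) (simp add: sum_distrib_left sum_distrib_right mult.assoc, rule sum.swap)

lemma cdot_mat_adj: "cdot m z (mat_vec m (mat_adj A) v) = cdot m (mat_vec m A z) v"
  unfolding cdot_def mat_vec_def mat_adj_def
  by (simp add: sum_distrib_left sum_distrib_right, subst sum.swap, simp add: mult_ac)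

lemma cdot_2: "cdot 2 z w = z 1 * cnj (w 1) + z 2 * cnj (w 2)"
  unfolding cdot_def atLeastAtMost_1_2 by simp

lemma cdot_T4_cis:
  "cdot 4 z (mat_vec 4 (T4 (cis t)) w)
    = (z 3 * cnj (w 3) + z 4 * cnj (w 4)) * cis (-t) + (z 1 * cnj (w 1) + z 2 * cnj (w 2)) * cis t"
  unfolding cdot_def mat_vec_def atLeastAtMost_1_4 by (simp add: T4_def cis_cnj algebra_simps)

lemma mat_vec_L8:
  "mat_vec 8 L8 z 1 = z 1" "mat_vec 8 L8 z 2 = z 7" "mat_vec 8 L8 z 3 = z 3" "mat_vec 8 L8 z 4 = z 5"
  "mat_vec 8 L8 z 5 = - z 4" "mat_vec 8 L8 z 6 = z 6" "mat_vec 8 L8 z 7 = - z 2" "mat_vec 8 L8 z 8 = z 8"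
  unfolding mat_vec_def atLeastAtMost_1_8 by (simp_all add: L8_def)

lemma mat_vec_V8:
  "mat_vec 8 (V8 g) v 1 = g 1 1 * v 1 + g 1 2 * v 2" "mat_vec 8 (V8 g) v 2 = g 2 1 * v 1 + g 2 2 * v 2"
  "mat_vec 8 (V8 g) v 3 = g 1 1 * v 3 + g 1 2 * v 4" "mat_vec 8 (V8 g) v 4 = g 2 1 * v 3 + g 2 2 * v 4"
  "mat_vec 8 (V8 g) v 5 = g 1 1 * v 5 + g 1 2 * v 6" "mat_vec 8 (V8 g) v 6 = g 2 1 * v 5 + g 2 2 * v 6"
  "mat_vec 8 (V8 g) v 7 = g 1 1 * v 7 + g 1 2 * v 8" "mat_vec 8 (V8 g) v 8 = g 2 1 * v 7 + g 2 2 * v 8"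
  unfolding mat_vec_def atLeastAtMost_1_8 by (simp_all add: V8_def)

definition T8_coeff :: "(nat \<Rightarrow> complex) \<Rightarrow> (nat \<Rightarrow> complex) \<Rightarrow> nat \<Rightarrow> nat \<Rightarrow> complex" where
  "T8_coeff z w i j =
     (if i = 1 \<and> j = 1 then z 1 * cnj (w 1) + z 2 * cnj (w 2) + z 3 * cnj (w 3) + z 4 * cnj (w 4)
      else if i = 1 \<and> j = 2 then z 1 * cnj (w 7) + z 3 * cnj (w 5) - z 4 * cnj (w 6) - z 2 * cnj (w 8)
      else if i = 2 \<and> j = 1 then z 7 * cnj (w 1) + z 5 * cnj (w 3) - z 6 * cnj (w 4) - z 8 * cnj (w 2)
      else z 5 * cnj (w 5) + z 6 * cnj (w 6) + z 7 * cnj (w 7) + z 8 * cnj (w 8))"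

lemma cdot_T8:
  "cdot 8 z (mat_vec 8 (T8 g) w) = (\<Sum>i\<in>{1,2}. \<Sum>j\<in>{1,2}. cnj (g i j) * T8_coeff z w i j)"
proof -
  have "cdot 8 z (mat_vec 8 (T8 g) w) = cdot 8 (mat_vec 8 L8 z) (mat_vec 8 (V8 g) (mat_vec 8 L8 w))"
    unfolding T8_def mat_vec_mat_mul cdot_mat_adj ..
  also have "\<dots> = (\<Sum>i\<in>{1,2}. \<Sum>j\<in>{1,2}. cnj (g i j) * T8_coeff z w i j)"
    unfolding cdot_def atLeastAtMost_1_8 \<comment> \<open>\<open>One_nat_def\<close> would turn the index \<open>1\<close> into \<open>Suc 0\<close>\<close>
    by (simp add: mat_vec_L8 mat_vec_V8 T8_coeff_def algebra_simps del: One_nat_def)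
  finally show ?thesis .
qed

lemma rho_eq_det_T8_coeff:
  "rho z w = T8_coeff z w 1 1 * T8_coeff z w 2 2 - T8_coeff z w 1 2 * T8_coeff z w 2 1"
  by (simp add: rho_def T8_coeff_def algebra_simps)

lemma gSU2_cnj:
  "cnj (gSU2 \<theta> \<alpha> \<gamma> 1 1) = of_real (cos \<theta>) * cis (-\<alpha>)"
  "cnj (gSU2 \<theta> \<alpha> \<gamma> 1 2) = of_real (sin \<theta>) * cis (-\<gamma>)"
  "cnj (gSU2 \<theta> \<alpha> \<gamma> 2 1) = - of_real (sin \<theta>) * cis \<gamma>"
  "cnj (gSU2 \<theta> \<alpha> \<gamma> 2 2) = of_real (cos \<theta>) * cis \<alpha>"
  by (simp_all add: gSU2_def cis_cnj)

lemma Q2_eq_cosh: "Q2 h z w = cosh (cdot 2 z w / of_real h)"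
proof -
  define u where "u = cdot 2 z w / of_real h"
  have "(\<lambda>n. if even n then u ^ n /\<^sub>R fact n else 0) sums cosh u"
    by (rule cosh_converges)
  then have "(\<lambda>k. u ^ (2*k) /\<^sub>R fact (2*k)) sums cosh u"
    by (subst (asm) sums_even_terms_iff[symmetric]) auto
  moreover have "u ^ (2*k) /\<^sub>R fact (2*k)
      = (z 1 * cnj (w 1) + z 2 * cnj (w 2)) ^ (2*k) / (of_nat (fact (2*k)) * of_real h ^ (2*k))" for k
    by (simp add: u_def cdot_2 power_divide scaleR_conv_of_real divide_inverse power_mult_distrib
        power_inverse mult_ac)
  ultimately show ?thesis
    unfolding Q2_def u_def by (simp add: sums_iff)
qed

lemma Q4_eq_circle_average:
  "Q4 h z w = of_real (1 / (2 * pi)) *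
     integral {0..2*pi} (\<lambda>\<psi>. exp (cdot 4 z (mat_vec 4 (T4 (cis \<psi>)) w) / of_real h))"
proof -
  define A where "A = z 1 * cnj (w 1) + z 2 * cnj (w 2)"
  define B where "B = z 3 * cnj (w 3) + z 4 * cnj (w 4)"
  define x where "x = B / of_real h"
  define y where "y = A / of_real h"
  have "(\<lambda>\<psi>. exp (cdot 4 z (mat_vec 4 (T4 (cis \<psi>)) w) / of_real h)) = (\<lambda>t. exp (x * cis (-t) + y * cis t))"
    unfolding cdot_T4_cis A_def[symmetric] B_def[symmetric] by (simp add: x_def y_def add_divide_distrib)
  then have "of_real (1 / (2 * pi)) *
      integral {0..2*pi} (\<lambda>\<psi>. exp (cdot 4 z (mat_vec 4 (T4 (cis \<psi>)) w) / of_real h)) = bessel_series (x*y)"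
    by (simp add: integral_exp_circle)
  moreover have "(x*y) ^ k / (fact k)\<^sup>2
      = (z 1 * cnj (w 1) + z 2 * cnj (w 2)) ^ k * (z 3 * cnj (w 3) + z 4 * cnj (w 4)) ^ k
        / ((of_nat (fact k))\<^sup>2 * of_real h ^ (2*k))" for k
    by (simp add: A_def B_def x_def y_def power_mult_distrib power_divide power_mult power2_eq_square mult_ac)
  ultimately show ?thesis
    using bessel_series_sums[of "x*y"] by (simp add: Q4_def sums_iff)
qed

lemma Q8_eq_SU2_average:
  assumes "h \<noteq> 0"
  shows "Q8 h z w =
    integral {0..pi/2} (\<lambda>\<theta>. integral {0..2*pi} (\<lambda>\<alpha>. integral {0..2*pi} (\<lambda>\<gamma>.
      exp (cdot 8 z (mat_vec 8 (T8 (gSU2 \<theta> \<alpha> \<gamma>)) w) / of_real h)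
      * of_real (sin \<theta> * cos \<theta> / (2 * pi\<^sup>2)))))"
proof -
  define a where "a = T8_coeff z w 1 1 / of_real h"
  define b where "b = T8_coeff z w 1 2 / of_real h"
  define e where "e = - T8_coeff z w 2 1 / of_real h"
  define d where "d = T8_coeff z w 2 2 / of_real h"
  have exponent: "cdot 8 z (mat_vec 8 (T8 (gSU2 \<theta> \<alpha> \<gamma>)) w) / of_real h
      = of_real (cos \<theta>) * (a * cis (-\<alpha>) + d * cis \<alpha>) + of_real (sin \<theta>) * (b * cis (-\<gamma>) + e * cis \<gamma>)"
    for \<theta> \<alpha> \<gamma>
    using assms by (simp add: cdot_T8 gSU2_cnj a_def b_def d_def e_def field_simps del: One_nat_def)
  have weight: "of_real (2*pi) * X * (of_real (2*pi) * Y) * of_real (sin \<theta> * cos \<theta> / (2 * pi\<^sup>2))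
      = of_real (2 * sin \<theta> * cos \<theta>) * X * Y" for X Y :: complex and \<theta>
    by (simp add: field_simps power2_eq_square)
  have "integral {0..2*pi} (\<lambda>\<alpha>. integral {0..2*pi} (\<lambda>\<gamma>.
      exp (cdot 8 z (mat_vec 8 (T8 (gSU2 \<theta> \<alpha> \<gamma>)) w) / of_real h) * of_real (sin \<theta> * cos \<theta> / (2 * pi\<^sup>2))))
    = of_real (2 * sin \<theta> * cos \<theta>) * bessel_series (of_real ((cos \<theta>)\<^sup>2) * (a*d))
      * bessel_series (of_real ((sin \<theta>)\<^sup>2) * (b*e))" for \<theta>
    unfolding exponent Henstock_Kurzweil_Integration.integral_mult_left integral_exp_torus weight ..
  moreover have "(a*d + b*e) ^ k / (fact k * fact (k + 1))
      = rho z w ^ k / (of_nat (fact k * fact (k + 1)) * of_real h ^ (2*k))" for k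
  proof -
    have "a*d + b*e = rho z w / of_real h ^ 2"
      using assms by (simp add: rho_eq_det_T8_coeff a_def b_def d_def e_def field_simps power2_eq_square)
    then show ?thesis
      by (simp add: power_divide power_mult del: fact_Suc)
  qed
  ultimately show ?thesis
    using integral_bessel_product_sums[of "a*d" "b*e"] by (simp add: Q8_def sums_iff)
qed

text \<open>The identities hold for all \<open>z\<close>, \<open>w\<close>.\<close>

theorem proposition2p3:
  fixes h :: real
  assumes "h > 0"
  shows "(\<forall>z w. nonzero_vec 2 z \<and> nonzero_vec 2 w \<longrightarrow>
            Q2 h z w = (exp (cdot 2 z w / of_real h) + exp (- cdot 2 z w / of_real h)) / 2)
       \<and> (\<forall>z w. nonzero_vec 4 z \<and> nonzero_vec 4 w \<longrightarrow>
            Q4 h z w = of_real (1 / (2 * pi)) *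
              integral {0..2*pi} (\<lambda>\<psi>. exp (cdot 4 z (mat_vec 4 (T4 (cis \<psi>)) w) / of_real h)))
       \<and> (\<forall>z w. nonzero_vec 8 z \<and> nonzero_vec 8 w \<longrightarrow>
            Q8 h z w =
              integral {0..pi/2} (\<lambda>\<theta>. integral {0..2*pi} (\<lambda>\<alpha>. integral {0..2*pi} (\<lambda>\<gamma>.
                 exp (cdot 8 z (mat_vec 8 (T8 (gSU2 \<theta> \<alpha> \<gamma>)) w) / of_real h)
                 * of_real (sin \<theta> * cos \<theta> / (2 * pi\<^sup>2))))))"
  using Q2_eq_cosh Q4_eq_circle_average Q8_eq_SU2_average assms
  by (simp add: cosh_def scaleR_conv_of_real)

end
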